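(* Let $G$ be an abelian Lie group whose identity component $G^0$ has finite index in $G$. If $S$ is a finitely generated subsemigroup of $G$ which is somewhere dense in $G$ (i.e. $\overline{S}$ contains a non-empty open subset of $G$), then $S\cap G^0$ contains a finitely generated subsemigroup of $G^0$ which is somewhere dense in $G^0$. *)

theory Defs
  imports "HOL-Analysis.Analysis"
begin

text \<open>Model of R^n inside the product space nat => real (product topology):
  functions vanishing from index n on. For n = 0 this is a single point.\<close>
definition euclid_model :: "nat \<Rightarrow> (nat \<Rightarrow> real) set" where
  "euclid_model n = {f. \<forall>i\<ge>n. f i = 0}"

definition locally_euclidean :: "'a::topological_space itself \<Rightarrow> bool" where
  "locally_euclidean _ \<longleftrightarrow>
     (\<forall>x::'a. \<exists>U n V. open U \<and> x \<in> U \<and>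
        openin (top_of_set (euclid_model n)) V \<and> U homeomorphic V)"

definition topological_ab_group :: "'a::{topological_space,ab_group_add} itself \<Rightarrow> bool" where
  "topological_ab_group _ \<longleftrightarrow>
     continuous_on UNIV (\<lambda>p::'a \<times> 'a. fst p + snd p) \<and>
     continuous_on UNIV (\<lambda>x::'a. - x)"

text \<open>Abelian Lie group (topological rendering: a Hausdorff locally
  Euclidean topological group carries a unique compatible Lie group structure).\<close>
definition abelian_lie_group :: "'a::{t2_space,ab_group_add} itself \<Rightarrow> bool" where
  "abelian_lie_group T \<longleftrightarrow> topological_ab_group T \<and> locally_euclidean T"

definition identity_component :: "'a::{topological_space,ab_group_add} set" where
  "identity_component = connected_component_set UNIV 0"

inductive_set sgr_gen :: "'a::plus set \<Rightarrow> 'a set" for F where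
  base: "x \<in> F \<Longrightarrow> x \<in> sgr_gen F"
| add: "x \<in> sgr_gen F \<Longrightarrow> y \<in> sgr_gen F \<Longrightarrow> x + y \<in> sgr_gen F"

definition fin_gen_subsemigroup_of :: "'a::plus set \<Rightarrow> 'a set \<Rightarrow> bool" where
  "fin_gen_subsemigroup_of S H \<longleftrightarrow> (\<exists>F. finite F \<and> F \<subseteq> H \<and> S = sgr_gen F)"

definition somewhere_dense_in :: "'a::topological_space set \<Rightarrow> 'a set \<Rightarrow> bool" where
  "somewhere_dense_in S H \<longleftrightarrow>
     (\<exists>U. U \<noteq> {} \<and> openin (top_of_set H) U \<and> U \<subseteq> closure S \<inter> H)"

end

theory Submission
  imports Defs
begin

text \<open>Let \<open>H\<close> be the identity component, a closed subgroup of finite index, so every element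
  has a positive multiple in \<open>H\<close>. If \<open>S\<close> is generated by the finite set \<open>F\<close> and \<open>d f \<in> H\<close>
  for all \<open>f \<in> F\<close>, every element of \<open>S\<close> is a combination of the generators with coefficients
  below \<open>d\<close> plus an element of the monoid generated by the \<open>d f\<close>; hence \<open>S \<inter> H\<close> is generated by
  the finitely many such combinations lying in \<open>S \<inter> H\<close> together with the \<open>d f\<close>.
  For density, \<open>S\<close> is the finite union of its intersections with the cosets of \<open>H\<close>, so one of
  them is somewhere dense, and a translation by a suitable element of \<open>S\<close> carries it into
  \<open>S \<inter> H\<close>.\<close>

fun nsmul :: "nat \<Rightarrow> 'a::monoid_add \<Rightarrow> 'a" where
  "nsmul 0 x = 0"
| "nsmul (Suc n) x = x + nsmul n x"

lemma nsmul_add: "nsmul (m + n) x = nsmul m x + nsmul n x"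
  by (induction m) (auto simp: add.assoc)

lemma nsmul_mult: "nsmul (m * n) x = nsmul m (nsmul n x)"
  by (induction m) (auto simp: nsmul_add)

lemma nsmul_closed:
  assumes "0 \<in> H" "\<And>x y. x \<in> H \<Longrightarrow> y \<in> H \<Longrightarrow> x + y \<in> H" "x \<in> H"
  shows "nsmul n x \<in> H"
  by (induction n) (use assms in auto)

abbreviation monoid_gen :: "'a::monoid_add set \<Rightarrow> 'a set" where
  "monoid_gen A \<equiv> insert 0 (sgr_gen A)"

lemma sgr_gen_least:
  assumes "A \<subseteq> X" "\<And>x y. x \<in> X \<Longrightarrow> y \<in> X \<Longrightarrow> x + y \<in> X"
  shows "sgr_gen A \<subseteq> X"
proof
  fix x assume "x \<in> sgr_gen A"
  then show "x \<in> X" by (induction rule: sgr_gen.induct) (use assms in auto)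
qed

lemma sgr_gen_mono: "A \<subseteq> B \<Longrightarrow> sgr_gen A \<subseteq> sgr_gen B"
  by (rule sgr_gen_least) (use sgr_gen.base sgr_gen.add in blast)+

lemma nsmul_in_sgr_gen: "x \<in> sgr_gen A \<Longrightarrow> n \<ge> 1 \<Longrightarrow> nsmul n x \<in> sgr_gen A"
proof (induction n)
  case (Suc n)
  then show ?case by (cases n) (auto intro: sgr_gen.intros)
qed simp

lemma monoid_gen_add: "x \<in> monoid_gen A \<Longrightarrow> y \<in> monoid_gen A \<Longrightarrow> x + y \<in> monoid_gen A"
  by (auto intro: sgr_gen.intros)

lemma monoid_gen_nsmul: "x \<in> monoid_gen A \<Longrightarrow> nsmul n x \<in> monoid_gen A"
  by (rule nsmul_closed) (auto intro: sgr_gen.intros)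

lemma monoid_gen_sum:
  fixes g :: "'i \<Rightarrow> 'a::comm_monoid_add"
  assumes "\<And>i. i \<in> I \<Longrightarrow> g i \<in> monoid_gen A"
  shows "sum g I \<in> monoid_gen A"
proof (cases "finite I")
  case True
  then show ?thesis using assms
  proof (induction I rule: finite_induct)
    case (insert i I)
    then show ?case using monoid_gen_add[of "g i" A "sum g I"] by simp
  qed simp
qed simp

lemma combination_in_monoid_gen: "(\<Sum>f\<in>F. nsmul (a f) f) \<in> monoid_gen F"
  by (rule monoid_gen_sum, rule monoid_gen_nsmul) (auto intro: sgr_gen.base)

subsection \<open>Reduction of coefficients modulo \<open>d\<close>\<close>

definition bounded_combinations :: "'a::comm_monoid_add set \<Rightarrow> nat \<Rightarrow> 'a set" where
  "bounded_combinations F d = (\<lambda>a. \<Sum>f\<in>F. nsmul (a f) f) ` (F \<rightarrow>\<^sub>E {..<d})"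

lemma finite_bounded_combinations: "finite F \<Longrightarrow> finite (bounded_combinations F d)"
  unfolding bounded_combinations_def by (intro finite_imageI finite_PiE) auto

lemma bounded_combinations_subset: "bounded_combinations F d \<subseteq> monoid_gen F"
  unfolding bounded_combinations_def using combination_in_monoid_gen by blast

lemma nsmul_mod_div: "nsmul n x = nsmul (n mod d) x + nsmul (n div d) (nsmul d x)"
  by (metis mod_div_mult_eq nsmul_add nsmul_mult)

lemma bounded_combinations_add:
  assumes "finite F" "d > 0" "r1 \<in> bounded_combinations F d" "r2 \<in> bounded_combinations F d"
  shows "\<exists>r\<in>bounded_combinations F d. \<exists>y\<in>monoid_gen (nsmul d ` F). r1 + r2 = r + y"
proof -
  obtain a1 a2 where a: "a1 \<in> F \<rightarrow>\<^sub>E {..<d}" "a2 \<in> F \<rightarrow>\<^sub>E {..<d}"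
    and r: "r1 = (\<Sum>f\<in>F. nsmul (a1 f) f)" "r2 = (\<Sum>f\<in>F. nsmul (a2 f) f)"
    using assms(3,4) unfolding bounded_combinations_def by auto
  define c where "c = (\<lambda>f\<in>F. (a1 f + a2 f) mod d)"
  define q where "q = (\<lambda>f. (a1 f + a2 f) div d)"
  have "r1 + r2 = (\<Sum>f\<in>F. nsmul (a1 f + a2 f) f)"
    by (simp add: r nsmul_add sum.distrib)
  also have "\<dots> = (\<Sum>f\<in>F. nsmul (c f) f + nsmul (q f) (nsmul d f))"
    by (intro sum.cong refl) (simp add: c_def q_def flip: nsmul_mod_div)
  also have "\<dots> = (\<Sum>f\<in>F. nsmul (c f) f) + (\<Sum>f\<in>F. nsmul (q f) (nsmul d f))"
    by (simp add: sum.distrib)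
  finally have "r1 + r2 = (\<Sum>f\<in>F. nsmul (c f) f) + (\<Sum>f\<in>F. nsmul (q f) (nsmul d f))" .
  moreover have "c \<in> F \<rightarrow>\<^sub>E {..<d}" using assms(2) by (auto simp: c_def)
  then have "(\<Sum>f\<in>F. nsmul (c f) f) \<in> bounded_combinations F d"
    unfolding bounded_combinations_def by blast
  moreover have "(\<Sum>f\<in>F. nsmul (q f) (nsmul d f)) \<in> monoid_gen (nsmul d ` F)"
    by (rule monoid_gen_sum, rule monoid_gen_nsmul) (auto intro: sgr_gen.base)
  ultimately show ?thesis by blast
qed

lemma sgr_gen_decompose:
  assumes "finite F" "d \<ge> 2" "x \<in> sgr_gen F"
  shows "\<exists>r\<in>bounded_combinations F d. \<exists>y\<in>monoid_gen (nsmul d ` F). x = r + y"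
  using assms(3)
proof (induction rule: sgr_gen.induct)
  case (base x)
  define a where "a = (\<lambda>g\<in>F. if g = x then 1 else 0 :: nat)"
  have "(\<Sum>g\<in>F. nsmul (a g) g) = (\<Sum>g\<in>F. if g = x then x else 0)"
    by (intro sum.cong) (auto simp: a_def)
  also have "\<dots> = x" using base assms(1) by simp
  finally have "x = (\<Sum>g\<in>F. nsmul (a g) g)" ..
  moreover have "a \<in> F \<rightarrow>\<^sub>E {..<d}" using assms(2) by (auto simp: a_def)
  ultimately have "x \<in> bounded_combinations F d"
    unfolding bounded_combinations_def by (rule image_eqI)
  then show ?case by (intro bexI[of _ x] bexI[of _ 0]) auto
next
  case (add x y)
  then obtain r1 r2 y1 y2 where
    r: "r1 \<in> bounded_combinations F d" "r2 \<in> bounded_combinations F d"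
    and y: "y1 \<in> monoid_gen (nsmul d ` F)" "y2 \<in> monoid_gen (nsmul d ` F)"
    and xy: "x = r1 + y1" "y = r2 + y2"
    by blast
  have "d > 0" using assms(2) by simp
  obtain r y3 where r3: "r \<in> bounded_combinations F d" and y3: "y3 \<in> monoid_gen (nsmul d ` F)"
    and carry: "r1 + r2 = r + y3"
    using bounded_combinations_add[OF assms(1) \<open>d > 0\<close> r] by blast
  have "x + y = (r1 + r2) + (y1 + y2)" using xy by (simp add: add_ac)
  also have "\<dots> = r + (y3 + (y1 + y2))" by (simp add: carry add.assoc)
  finally show ?case using r3 monoid_gen_add[OF y3 monoid_gen_add[OF y]] by blast
qed

definition additive_subgroup :: "'a::ab_group_add set \<Rightarrow> bool" where
  "additive_subgroup H \<longleftrightarrow> 0 \<in> H \<and> (\<forall>x\<in>H. \<forall>y\<in>H. x + y \<in> H) \<and> (\<forall>x\<in>H. - x \<in> H)"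

lemma additive_subgroupD:
  assumes "additive_subgroup H"
  shows "0 \<in> H" "x \<in> H \<Longrightarrow> y \<in> H \<Longrightarrow> x + y \<in> H" "x \<in> H \<Longrightarrow> - x \<in> H"
  using assms unfolding additive_subgroup_def by auto

lemma finite_cosets_imp_nsmul_mem:
  fixes H :: "'a::cancel_comm_monoid_add set"
  assumes "finite (range (\<lambda>g. (\<lambda>x. g + x) ` H))" "0 \<in> H"
  shows "\<exists>k\<ge>1. nsmul k s \<in> H"
proof -
  let ?coset = "\<lambda>n. (\<lambda>x. nsmul n s + x) ` H"
  have "range ?coset \<subseteq> range (\<lambda>g. (\<lambda>x. g + x) ` H)" by auto
  then have "finite (range ?coset)" using assms(1) by (rule finite_subset)
  then have "\<not> inj ?coset" using finite_imageD infinite_UNIV_nat by blast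
  then obtain i j where "i \<noteq> j" "?coset i = ?coset j" unfolding inj_def by blast
  then obtain i j where "i < j" "?coset i = ?coset j" by (metis linorder_neqE_nat)
  moreover have "nsmul j s \<in> ?coset j" using assms(2) by force
  ultimately obtain h where "h \<in> H" "nsmul j s = nsmul i s + h" by auto
  moreover have "nsmul j s = nsmul i s + nsmul (j - i) s"
    using \<open>i < j\<close> by (simp flip: nsmul_add)
  ultimately show ?thesis using \<open>i < j\<close> by (intro exI[of _ "j - i"]) auto
qed

lemma common_nsmul_mem:
  assumes "finite F" "0 \<in> H" "\<And>x y. x \<in> H \<Longrightarrow> y \<in> H \<Longrightarrow> x + y \<in> H"
    and "\<And>f. f \<in> F \<Longrightarrow> \<exists>k\<ge>1. nsmul k f \<in> H"
  shows "\<exists>d\<ge>2. \<forall>f\<in>F. nsmul d f \<in> H"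
proof -
  obtain k where k: "\<And>f. f \<in> F \<Longrightarrow> k f \<ge> 1 \<and> nsmul (k f) f \<in> H"
    using assms(4) by metis
  define d where "d = 2 * (\<Prod>f\<in>F. k f)"
  have "d \<ge> 2" using k by (simp add: d_def prod_pos Suc_le_eq)
  moreover have "nsmul d f \<in> H" if "f \<in> F" for f
  proof -
    have "d = 2 * (\<Prod>g\<in>F - {f}. k g) * k f"
      using that assms(1) by (simp add: d_def prod.remove)
    then show ?thesis
      using k[OF that] assms(2,3) by (simp add: nsmul_mult nsmul_closed)
  qed
  ultimately show ?thesis by blast
qed

text \<open>Since the \<open>d\<close>-th multiples of the generators lie in \<open>H\<close>, so does the bounded part of
  the decomposition of any element of \<open>S \<inter> H\<close>.\<close>

lemma sgr_gen_Int_subgroup_eq: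
  assumes "additive_subgroup H" "finite F" "d \<ge> 2" "nsmul d ` F \<subseteq> H"
  shows "sgr_gen F \<inter> H = sgr_gen ((bounded_combinations F d \<union> nsmul d ` F) \<inter> H \<inter> sgr_gen F)"
    (is "?S \<inter> H = sgr_gen ?G")
proof
  note H = additive_subgroupD[OF assms(1)]
  show "sgr_gen ?G \<subseteq> ?S \<inter> H"
    by (rule sgr_gen_least) (auto simp: sgr_gen.add H(2))
  have "nsmul d ` F \<subseteq> ?S"
    using assms(3) by (auto intro: nsmul_in_sgr_gen sgr_gen.base)
  then have DG: "sgr_gen (nsmul d ` F) \<subseteq> sgr_gen ?G"
    using assms(4) by (intro sgr_gen_mono) auto
  have DH: "sgr_gen (nsmul d ` F) \<subseteq> H"
    using assms(4) H(2) by (rule sgr_gen_least)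
  show "?S \<inter> H \<subseteq> sgr_gen ?G"
  proof
    fix x assume x: "x \<in> ?S \<inter> H"
    then obtain r y where r: "r \<in> bounded_combinations F d"
      and y: "y \<in> monoid_gen (nsmul d ` F)" and xry: "x = r + y"
      using sgr_gen_decompose[OF assms(2,3)] by blast
    have "- y \<in> H" using y DH H(1,3) by auto
    then have rH: "r \<in> H" using x xry H(2)[of x "- y"] by (simp add: add.commute)
    show "x \<in> sgr_gen ?G"
    proof (cases "y = 0")
      case True
      then show ?thesis using x r xry by (auto intro: sgr_gen.base)
    next
      case False
      then have yG: "y \<in> sgr_gen ?G" using y DG by auto
      have "r = 0 \<or> r \<in> ?G" using r rH bounded_combinations_subset by blast
      then show ?thesis using yG xry by (metis add_0 sgr_gen.add sgr_gen.base)
    qed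
  qed
qed

lemma continuous_on_translation:
  assumes "topological_ab_group TYPE('a::{topological_space,ab_group_add})"
  shows "continuous_on UNIV (\<lambda>x::'a. a + x)"
proof -
  have add: "continuous_on UNIV (\<lambda>p::'a \<times> 'a. fst p + snd p)"
    using assms by (simp add: topological_ab_group_def)
  have "continuous_on UNIV (\<lambda>x::'a. (a, x))" by (intro continuous_intros)
  from continuous_on_compose2[OF add this] show ?thesis by simp
qed

lemma open_translation:
  assumes "topological_ab_group TYPE('a::{topological_space,ab_group_add})" "open (V :: 'a set)"
  shows "open ((\<lambda>x. a + x) ` V)"
proof -
  have "(\<lambda>x. a + x) ` V = (\<lambda>x. - a + x) -` V"
  proof (intro set_eqI iffI)
    fix y assume "y \<in> (\<lambda>x. - a + x) -` V"
    then show "y \<in> (\<lambda>x. a + x) ` V" by (intro image_eqI[of _ _ "- a + y"]) auto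
  qed auto
  then show ?thesis
    using open_vimage[OF assms(2) continuous_on_translation[OF assms(1), of "- a"]] by (simp only:)
qed

lemma identity_component_subgroup:
  assumes "topological_ab_group TYPE('a::{topological_space,ab_group_add})"
  shows "additive_subgroup (identity_component :: 'a set)"
proof -
  let ?H = "identity_component :: 'a set"
  have H: "connected ?H" "0 \<in> ?H" by (simp_all add: identity_component_def)
  have "a + b \<in> ?H" if "a \<in> ?H" "b \<in> ?H" for a b
  proof -
    have "connected ((\<lambda>x. a + x) ` ?H)"
      by (rule connected_continuous_image[OF continuous_on_subset H(1)])
        (use continuous_on_translation[OF assms] in auto)
    moreover have "a \<in> (\<lambda>x. a + x) ` ?H" using H(2) by force
    ultimately have "connected (?H \<union> (\<lambda>x. a + x) ` ?H)"
      using \<open>a \<in> ?H\<close> by (intro connected_Un[OF H(1)]) auto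
    from connected_component_maximal[OF _ this subset_UNIV, of 0]
    have "?H \<union> (\<lambda>x. a + x) ` ?H \<subseteq> ?H"
      using H(2) by (simp add: identity_component_def)
    then show ?thesis using \<open>b \<in> ?H\<close> by auto
  qed
  moreover have "- a \<in> ?H" if "a \<in> ?H" for a
  proof -
    have "continuous_on ?H uminus"
      using assms unfolding topological_ab_group_def by (blast intro: continuous_on_subset)
    then have "connected (uminus ` ?H)" using H(1) by (rule connected_continuous_image)
    from connected_component_maximal[OF _ this subset_UNIV, of 0]
    have "uminus ` ?H \<subseteq> ?H"
      using H(2) by (force simp: identity_component_def)
    then show ?thesis using that by auto
  qed
  ultimately show ?thesis using H(2) unfolding additive_subgroup_def by blast
qed

lemma somewhere_dense_member_of_finite_Union:
  assumes "finite \<A>" "open U" "U \<noteq> {}" "U \<subseteq> closure (\<Union>\<A>)"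
  shows "\<exists>A\<in>\<A>. \<exists>V. open V \<and> V \<noteq> {} \<and> V \<subseteq> closure A"
  using assms
proof (induction \<A> arbitrary: U rule: finite_induct)
  case empty
  then show ?case by auto
next
  case (insert A \<A>)
  show ?case
  proof (cases "U \<subseteq> closure A")
    case True
    then show ?thesis using insert.prems by blast
  next
    case False
    have "open (U - closure A)" using insert.prems by (simp add: open_Diff)
    moreover have "U - closure A \<subseteq> closure (\<Union>\<A>)" using insert.prems by auto
    ultimately obtain B V where "B \<in> \<A>" "open V" "V \<noteq> {}" "V \<subseteq> closure B"
      using insert.IH[of "U - closure A"] False by auto
    then show ?thesis by auto
  qed
qed

lemma somewhere_dense_translate:
  assumes "topological_ab_group TYPE('a::{topological_space,ab_group_add})"
    and "open V" "V \<noteq> {}" "V \<subseteq> closure A" "(\<lambda>x. t + x) ` A \<subseteq> T" "T \<subseteq> H" "closed (H :: 'a set)"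
  shows "somewhere_dense_in T H"
proof -
  let ?W = "(\<lambda>x. t + x) ` V"
  have "continuous_on (closure A) (\<lambda>x. t + x)"
    using continuous_on_subset[OF continuous_on_translation[OF assms(1)] subset_UNIV] .
  then have "(\<lambda>x. t + x) ` closure A \<subseteq> closure T"
    by (rule image_closure_subset) (use assms(5) closure_subset in blast)+
  then have "?W \<subseteq> closure T" using assms(4) by blast
  moreover have "closure T \<subseteq> H" using assms(6,7) by (rule closure_minimal)
  moreover have "open ?W" using open_translation[OF assms(1,2)] .
  ultimately show ?thesis
    unfolding somewhere_dense_in_def using assms(3) by (intro exI[of _ ?W]) (auto simp: openin_open)
qed

text \<open>One coset \<open>g + H\<close> meets \<open>S\<close> in a somewhere dense set; picking \<open>s\<close> in it and \<open>k s \<in> H\<close>,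
  the translation by \<open>t = (2 k - 1) s\<close> maps \<open>g + H = s + H\<close> onto \<open>2 k s + H = H\<close>. The factor
  \<open>2\<close> makes \<open>t\<close> a positive multiple of \<open>s\<close> even for \<open>k = 1\<close>, so \<open>t \<in> S\<close> without \<open>0 \<in> S\<close>.\<close>

lemma somewhere_dense_Int_subgroup:
  fixes S H :: "'a::{topological_space,ab_group_add} set"
  assumes "topological_ab_group TYPE('a)" "additive_subgroup H" "closed H"
    and "finite (range (\<lambda>g. (\<lambda>x. g + x) ` H))"
    and S_add: "\<And>x y. x \<in> S \<Longrightarrow> y \<in> S \<Longrightarrow> x + y \<in> S" and "somewhere_dense_in S UNIV"
  shows "somewhere_dense_in (S \<inter> H) H"
proof -
  note H = additive_subgroupD[OF assms(2)]
  let ?pieces = "(\<lambda>C. S \<inter> C) ` range (\<lambda>g. (\<lambda>x. g + x) ` H)"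
  obtain U where U: "open U" "U \<noteq> {}" "U \<subseteq> closure S"
    using assms(6) unfolding somewhere_dense_in_def by auto
  have "S \<subseteq> \<Union>?pieces"
  proof
    fix x assume "x \<in> S"
    then have "x \<in> S \<inter> (\<lambda>y. x + y) ` H" using H(1) by force
    then show "x \<in> \<Union>?pieces" by blast
  qed
  then have "U \<subseteq> closure (\<Union>?pieces)" using U(3) closure_mono by blast
  moreover have "finite ?pieces" using assms(4) by simp
  ultimately obtain A V where "A \<in> ?pieces" and V: "open V" "V \<noteq> {}" "V \<subseteq> closure A"
    by (metis somewhere_dense_member_of_finite_Union U(1,2))
  then obtain g where A: "A = S \<inter> (\<lambda>x. g + x) ` H" by blast
  have "A \<noteq> {}" using V by (metis closure_empty subset_empty)
  then obtain s h0 where s: "s \<in> S" "h0 \<in> H" "s = g + h0" unfolding A by blast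
  obtain k where "k \<ge> 1" "nsmul k s \<in> H"
    using finite_cosets_imp_nsmul_mem[OF assms(4) H(1)] by blast
  define t where "t = nsmul (2 * k - 1) s"
  have "t \<in> sgr_gen {s}"
    unfolding t_def using \<open>k \<ge> 1\<close> by (intro nsmul_in_sgr_gen sgr_gen.base) auto
  moreover have "sgr_gen {s} \<subseteq> S" by (rule sgr_gen_least) (use s(1) S_add in auto)
  ultimately have "t \<in> S" by blast
  have "Suc (2 * k - 1) = 2 * k" using \<open>k \<ge> 1\<close> by simp
  then have "s + t = nsmul 2 (nsmul k s)"
    unfolding t_def by (metis nsmul.simps(2) nsmul_mult)
  then have "s + t \<in> H" using H(1,2) \<open>nsmul k s \<in> H\<close> by (simp add: nsmul_closed)
  have "t + a \<in> S \<inter> H" if a: "a \<in> A" for a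
  proof -
    obtain h where "h \<in> H" "a = g + h" "a \<in> S" using a A by blast
    then have "t + a = (s + t) + (- h0 + h)" using s(3) by (simp add: algebra_simps)
    moreover have "(s + t) + (- h0 + h) \<in> H"
      using H(2,3) \<open>s + t \<in> H\<close> \<open>h \<in> H\<close> s(2) by blast
    ultimately show ?thesis using S_add[OF \<open>t \<in> S\<close> \<open>a \<in> S\<close>] by (metis IntI)
  qed
  then have "(\<lambda>x. t + x) ` A \<subseteq> S \<inter> H" by blast
  from somewhere_dense_translate[OF assms(1) V this _ assms(3)] show ?thesis by simp
qed

theorem lemma2p5:
  fixes S :: "'a::{t2_space,ab_group_add} set"
  assumes "abelian_lie_group TYPE('a)"
    and "finite ((\<lambda>g. (\<lambda>x. g + x) ` (identity_component :: 'a set)) ` UNIV)"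
    and "fin_gen_subsemigroup_of S UNIV"
    and "somewhere_dense_in S UNIV"
  shows "\<exists>T. T \<subseteq> S \<inter> identity_component \<and>
             fin_gen_subsemigroup_of T identity_component \<and>
             somewhere_dense_in T identity_component"
proof -
  let ?H = "identity_component :: 'a set"
  have top: "topological_ab_group TYPE('a)"
    using assms(1) by (simp add: abelian_lie_group_def)
  have H: "additive_subgroup ?H" using identity_component_subgroup[OF top] .
  have "closed ?H" unfolding identity_component_def by (simp add: closed_connected_component)
  note H0 = additive_subgroupD(1)[OF H]
  obtain F where F: "finite F" "S = sgr_gen F"
    using assms(3) unfolding fin_gen_subsemigroup_of_def by blast
  obtain d where d: "d \<ge> 2" "\<forall>f\<in>F. nsmul d f \<in> ?H"
    using common_nsmul_mem[OF F(1) H0 additive_subgroupD(2)[OF H]]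
      finite_cosets_imp_nsmul_mem[OF assms(2) H0] by blast
  then have "nsmul d ` F \<subseteq> ?H" by blast
  note S_Int_H = sgr_gen_Int_subgroup_eq[OF H F(1) d(1) this]
  have "fin_gen_subsemigroup_of (S \<inter> ?H) ?H"
    unfolding fin_gen_subsemigroup_of_def F(2) S_Int_H
    by (intro exI[of _ "(bounded_combinations F d \<union> nsmul d ` F) \<inter> ?H \<inter> sgr_gen F"])
      (auto simp: F(1) finite_bounded_combinations)
  moreover have "\<And>x y. x \<in> S \<Longrightarrow> y \<in> S \<Longrightarrow> x + y \<in> S"
    unfolding F(2) by (rule sgr_gen.add)
  then have "somewhere_dense_in (S \<inter> ?H) ?H"
    by (rule somewhere_dense_Int_subgroup[OF top H \<open>closed ?H\<close> assms(2) _ assms(4)])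
  ultimately show ?thesis by blast
qed

end
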